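(* Let $w=(u,v)\in\mathrm{WI}_n\times\mathrm{Cay}_n$. Then $\mathrm{Des}(u)\subseteq\mathrm{Des}(v)$ if and only if $(w^T)^T=w$. Moreover, $T$ is an involution on $\mathrm{Bur}_n$.
   Context: $\mathrm{Cay}_n$ is the set of Cayley permutations of length $n$ (words of positive integers in which every integer from $1$ to the maximum occurs), and $\mathrm{WI}_n$ the set of weakly increasing elements of $\mathrm{Cay}_n$. A pair $(u,v)\in\mathrm{WI}_n\times\mathrm{Cay}_n$ is viewed as a biword with columns $\binom{u(i)}{v(i)}$, $i=1,\dots,n$. The Burge transpose $(u,v)^T$ is obtained by turning every column $\binom{a}{b}$ upside down into $\binom{b}{a}$ and then sorting the columns in increasing order of top entry, breaking ties by decreasing order of bottom entry; it again lies in $\mathrm{WI}_n\times\mathrm{Cay}_n$. The weak descent set of a word $v$ of length $n$ is $\mathrm{Des}(v)=\{i\in[n-1]:v(i)\ge v(i+1)\}$. $\mathrm{Bur}_n=\{(u,v)\in\mathrm{WI}_n\times\mathrm{Cay}_n:\mathrm{Des}(u)\subseteq\mathrm{Des}(v)\}$ (Burge words). *)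

theory Defs
  imports Main "HOL-Library.Product_Lexorder"
begin

text \<open>Words are lists of naturals; position i (1-based, as in the paper) is list index i-1.\<close>

definition cayley :: "nat list \<Rightarrow> bool" where
  "cayley w \<longleftrightarrow> (\<exists>m. set w = {1..m})"

definition Cay :: "nat \<Rightarrow> nat list set" where
  "Cay n = {w. length w = n \<and> cayley w}"

definition WI :: "nat \<Rightarrow> nat list set" where
  "WI n = {w. w \<in> Cay n \<and> sorted w}"

definition Des :: "nat list \<Rightarrow> nat set" where
  "Des v = {i. 1 \<le> i \<and> i < length v \<and> v ! (i - 1) \<ge> v ! i}"

definition burge_transpose :: "nat list \<times> nat list \<Rightarrow> nat list \<times> nat list" where
  "burge_transpose w =
     (let cols = map (\<lambda>(a, b). (b, a)) (zip (fst w) (snd w));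
          sorted_cols = sort_key (\<lambda>(t, b). (t, - int b)) cols
      in (map fst sorted_cols, map snd sorted_cols))"

definition Bur :: "nat \<Rightarrow> (nat list \<times> nat list) set" where
  "Bur n = {(u, v). u \<in> WI n \<and> v \<in> Cay n \<and> Des u \<subseteq> Des v}"

end

theory Submission
  imports Defs "HOL-Library.Multiset"
begin

text \<open>Flipping the columns of \<open>(u, v)\<close> gives the biword \<open>(v, u)\<close>, so \<open>T\<close> sorts the columns
  of \<open>(v, u)\<close> by the key \<open>(top, -bottom)\<close>. This key is injective, so the sorted word depends
  only on the multiset of columns; applying \<open>T\<close> twice therefore just sorts the columns of
  \<open>(u, v)\<close>, and \<open>T (T w) = w\<close> means that the columns of \<open>w\<close> are already sorted. When \<open>u\<close> is
  weakly increasing this says that \<open>v\<close> weakly decreases along every run of equal letters of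
  \<open>u\<close>, i.e. \<open>Des u \<subseteq> Des v\<close>. Every \<open>T w\<close> has sorted columns, hence is a Burge word.\<close>

definition burge_key :: "nat \<times> nat \<Rightarrow> nat \<times> int" where
  "burge_key = (\<lambda>(t, b). (t, - int b))"

lemma inj_burge_key: "inj burge_key"
  by (auto simp: inj_def burge_key_def)

lemma burge_key_le_iff:
  "burge_key (a, b) \<le> burge_key (c, d) \<longleftrightarrow> a < c \<or> a = c \<and> d \<le> b"
  by (auto simp: burge_key_def less_eq_prod_def)

lemma burge_transpose_eq:
  "burge_transpose (u, v) =
     (map fst (sort_key burge_key (zip v u)), map snd (sort_key burge_key (zip v u)))"
  unfolding burge_transpose_def burge_key_def Let_def by (simp flip: zip_commute)

lemma burge_transpose_burge_transpose_eq:
  "burge_transpose (burge_transpose (u, v)) =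
     (map fst (sort_key burge_key (zip u v)), map snd (sort_key burge_key (zip u v)))"
proof -
  let ?S = "sort_key burge_key (zip v u)"
  have "zip (map snd ?S) (map fst ?S) = map (\<lambda>(x, y). (y, x)) ?S"
    by (subst zip_commute) (simp only: zip_map_fst_snd)
  then have "mset (zip (map snd ?S) (map fst ?S)) = mset (map (\<lambda>(x, y). (y, x)) (zip v u))"
    by simp
  then have "mset (zip (map snd ?S) (map fst ?S)) = mset (zip u v)"
    by (simp flip: zip_commute)
  then have "sort_key burge_key (zip (map snd ?S) (map fst ?S)) = sort_key burge_key (zip u v)"
    by (rule sort_key_eq_sort_key) (use inj_burge_key in \<open>blast intro: inj_on_subset\<close>)
  then show ?thesis
    by (simp only: burge_transpose_eq)
qed

lemma burge_transpose_burge_transpose_eq_iff: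
  assumes "length u = length v"
  shows "burge_transpose (burge_transpose (u, v)) = (u, v) \<longleftrightarrow>
    sorted (map burge_key (zip u v))"
proof
  assume "burge_transpose (burge_transpose (u, v)) = (u, v)"
  then have "sort_key burge_key (zip u v) = zip u v"
    unfolding burge_transpose_burge_transpose_eq by (metis prod.inject zip_map_fst_snd)
  then show "sorted (map burge_key (zip u v))"
    by (metis sorted_sort_key)
next
  assume "sorted (map burge_key (zip u v))"
  then show "burge_transpose (burge_transpose (u, v)) = (u, v)"
    unfolding burge_transpose_burge_transpose_eq using assms
    by (simp add: sort_key_id_if_sorted)
qed

lemma sorted_burge_key_iff_Des_subset:
  assumes "length u = length v" and "sorted u"
  shows "sorted (map burge_key (zip u v)) \<longleftrightarrow> Des u \<subseteq> Des v"
proof -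
  have u_mono: "u ! i \<le> u ! Suc i" if "Suc i < length u" for i
    using assms(2) that by (simp add: sorted_iff_nth_Suc)
  have key_mono_iff: "burge_key (u ! i, v ! i) \<le> burge_key (u ! Suc i, v ! Suc i) \<longleftrightarrow>
      (u ! i = u ! Suc i \<longrightarrow> v ! Suc i \<le> v ! i)" if "Suc i < length u" for i
    using u_mono[OF that] by (auto simp: burge_key_le_iff)
  have "sorted (map burge_key (zip u v)) \<longleftrightarrow>
      (\<forall>i. Suc i < length u \<longrightarrow> u ! i = u ! Suc i \<longrightarrow> v ! Suc i \<le> v ! i)"
    using assms(1) key_mono_iff by (simp add: sorted_iff_nth_Suc)
  also have "\<dots> \<longleftrightarrow> (\<forall>i. Suc i \<in> Des u \<longrightarrow> Suc i \<in> Des v)"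
    using assms(1) u_mono by (auto simp: Des_def dest: le_antisym)
  also have "\<dots> \<longleftrightarrow> Des u \<subseteq> Des v"
  proof -
    have "0 \<notin> Des u"
      by (simp add: Des_def)
    then show ?thesis
      by (metis not0_implies_Suc subset_iff)
  qed
  finally show ?thesis .
qed

lemma Des_subset_iff_burge_transpose_burge_transpose_eq:
  assumes "u \<in> WI n" and "v \<in> Cay n"
  shows "Des u \<subseteq> Des v \<longleftrightarrow> burge_transpose (burge_transpose (u, v)) = (u, v)"
proof -
  have "length u = length v" "sorted u"
    using assms by (auto simp: WI_def Cay_def)
  then show ?thesis
    by (simp add: burge_transpose_burge_transpose_eq_iff sorted_burge_key_iff_Des_subset)
qed

lemma burge_transpose_mem_WI_Cay:
  assumes "u \<in> WI n" and "v \<in> Cay n"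
  shows "fst (burge_transpose (u, v)) \<in> WI n" and "snd (burge_transpose (u, v)) \<in> Cay n"
proof -
  let ?S = "sort_key burge_key (zip v u)"
  have len: "length u = n" "length v = n"
    using assms by (auto simp: WI_def Cay_def)
  have "sorted (map burge_key ?S)"
    by simp
  then have "sorted (map fst ?S)"
    unfolding sorted_map by (rule sorted_wrt_mono_rel[rotated])
      (auto simp: burge_key_le_iff)
  moreover have "set (map fst ?S) = set v" and "set (map snd ?S) = set u"
    using len by (metis map_fst_zip set_map set_sort, metis map_snd_zip set_map set_sort)
  ultimately show "fst (burge_transpose (u, v)) \<in> WI n" and "snd (burge_transpose (u, v)) \<in> Cay n"
    using assms len by (auto simp: burge_transpose_eq WI_def Cay_def cayley_def)
qed

lemma burge_transpose_burge_transpose_burge_transpose: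
  "burge_transpose (burge_transpose (burge_transpose w)) = burge_transpose w"
proof (cases w)
  case (Pair u v)
  show ?thesis
    unfolding Pair burge_transpose_eq[of u v]
    by (simp only: burge_transpose_burge_transpose_eq zip_map_fst_snd sorted_sort_key
        sort_key_id_if_sorted)
qed

lemma burge_transpose_mem_Bur:
  assumes "u \<in> WI n" and "v \<in> Cay n"
  shows "burge_transpose (u, v) \<in> Bur n"
proof -
  obtain u' v' where uv': "burge_transpose (u, v) = (u', v')"
    by (cases "burge_transpose (u, v)")
  then have "u' \<in> WI n" "v' \<in> Cay n"
    using burge_transpose_mem_WI_Cay[OF assms] by simp_all
  moreover have "burge_transpose (burge_transpose (u', v')) = (u', v')"
    using burge_transpose_burge_transpose_burge_transpose[of "(u, v)"] uv' by simp
  ultimately show ?thesis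
    using Des_subset_iff_burge_transpose_burge_transpose_eq uv' by (simp add: Bur_def)
qed

theorem lemma3p1:
  fixes n :: nat
  shows "(\<forall>u v. u \<in> WI n \<longrightarrow> v \<in> Cay n \<longrightarrow>
           (Des u \<subseteq> Des v \<longleftrightarrow> burge_transpose (burge_transpose (u, v)) = (u, v)))
         \<and> burge_transpose ` Bur n \<subseteq> Bur n
         \<and> (\<forall>w \<in> Bur n. burge_transpose (burge_transpose w) = w)"
proof (intro conjI allI impI ballI subsetI)
  fix u v
  assume "u \<in> WI n" "v \<in> Cay n"
  then show "Des u \<subseteq> Des v \<longleftrightarrow> burge_transpose (burge_transpose (u, v)) = (u, v)"
    by (rule Des_subset_iff_burge_transpose_burge_transpose_eq)
next
  fix w
  assume "w \<in> burge_transpose ` Bur n"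
  then obtain u v where "u \<in> WI n" "v \<in> Cay n" "w = burge_transpose (u, v)"
    by (auto simp: Bur_def)
  then show "w \<in> Bur n"
    using burge_transpose_mem_Bur by blast
next
  fix w
  assume "w \<in> Bur n"
  then show "burge_transpose (burge_transpose w) = w"
    using Des_subset_iff_burge_transpose_burge_transpose_eq by (auto simp: Bur_def)
qed

end
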